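(* There exist constants $c<\infty$ and $b>0$, independent of $N$, such that for every positive integer $N$, every $x\in[-N,N]$ and every $t\ge 0$, $$E_x\big[e^{-T^*(t)}\big]\le c\,e^{-bN^{-2}t}.$$
   Context: For a positive integer $N$, let $(x_s)_{s\ge0}$ be the continuous-time random walk on $[-N,N]\cap\mathbb Z$ which jumps from $y$ to each neighbour $y\pm1$ lying in $[-N,N]$ at rate $1/2$ (jumps out of $[-N,N]$ are suppressed); $E_x$ denotes expectation for this walk started at $x$. Let $T^*(t)=\int_0^t(\mathbf 1_{x_s=N}+\mathbf 1_{x_s=-N})\,ds$ be the time spent in $\{-N,N\}$ during $[0,t]$. *)

theory Defs
  imports "HOL-Probability.Probability"
begin

text \<open>Construction of the continuous-time random walk on [-N,N] by uniformization:
  the total jump-attempt rate is 1; i.i.d. Exp(1) holding times and i.i.d. fair coins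
  choose a proposed neighbour y+1 or y-1 (each therefore at rate 1/2); proposals leaving
  [-N,N] are suppressed (the walk stays put).\<close>

definition exp_meas :: "real measure" where
  "exp_meas = density lborel (exponential_density 1)"

definition step_meas :: "(real \<times> bool) measure" where
  "step_meas = exp_meas \<Otimes>\<^sub>M measure_pmf (bernoulli_pmf (1/2))"

definition walk_space :: "(nat \<Rightarrow> real \<times> bool) measure" where
  "walk_space = PiM UNIV (\<lambda>_. step_meas)"

fun jump_chain :: "nat \<Rightarrow> int \<Rightarrow> (nat \<Rightarrow> real \<times> bool) \<Rightarrow> nat \<Rightarrow> int" where
  "jump_chain N x \<omega> 0 = x"
| "jump_chain N x \<omega> (Suc n) =
     (let y = jump_chain N x \<omega> n in
      if snd (\<omega> n) then (if y + 1 \<le> int N then y + 1 else y)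
      else (if - int N \<le> y - 1 then y - 1 else y))"

text \<open>Number of jump attempts in [0,s]: the k-th attempt (k = 0,1,...) happens at
  time of the sum of the first k+1 holding times.\<close>
definition njumps :: "(nat \<Rightarrow> real \<times> bool) \<Rightarrow> real \<Rightarrow> nat" where
  "njumps \<omega> s = card {k::nat. (\<Sum>i\<le>k. fst (\<omega> i)) \<le> s}"

definition walk_pos :: "nat \<Rightarrow> int \<Rightarrow> (nat \<Rightarrow> real \<times> bool) \<Rightarrow> real \<Rightarrow> int" where
  "walk_pos N x \<omega> s = jump_chain N x \<omega> (njumps \<omega> s)"

definition Tstar :: "nat \<Rightarrow> int \<Rightarrow> real \<Rightarrow> (nat \<Rightarrow> real \<times> bool) \<Rightarrow> real" where
  "Tstar N x t \<omega> =
     (LINT s:{0..t}|lborel. (if walk_pos N x \<omega> s = int N \<or> walk_pos N x \<omega> s = - int N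
                             then 1 else 0))"

end

theory Submission
  imports Defs
begin

text \<open>
  Let M = \<lfloor>t/4\<rfloor>. If the first M holding times add up to more than t, an event of
  probability at most e^(-t/2) 2^M by the exponential Chebyshev inequality, bound e^(-T*(t))
  by 1. Otherwise T*(t) is at least the time the jump chain spends in {-N, N} during its first
  M steps. Discounting every holding time \<tau> spent there by e^(-\<tau>), the function
  V(y) = 3N^2 - y^2 contracts along the jump chain by the factor 1 - 1/(3N^2) per step: in the
  interior the mean of V over the two neighbours is V(y) - 1, and at the boundary the discount
  has mean 1/2. As 2N^2 \<le> V \<le> 3N^2 on [-N, N], this gives
  E e^(-T*(t)) \<le> 3/2 (1 - 1/(3N^2))^M + e^(-t/2) 2^M \<le> 6 e^(-t/(12N^2)).
\<close>

lemma prob_space_exp_meas: "prob_space exp_meas"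
  unfolding exp_meas_def by (rule prob_space_exponential_density) simp

lemma prob_space_step_meas: "prob_space step_meas"
proof -
  interpret E: prob_space exp_meas by (rule prob_space_exp_meas)
  interpret B: prob_space "measure_pmf (bernoulli_pmf (1/2))" by (rule prob_space_measure_pmf)
  interpret P: pair_prob_space exp_meas "measure_pmf (bernoulli_pmf (1/2))" ..
  show ?thesis unfolding step_meas_def by (rule P.prob_space_axioms)
qed

interpretation steps: sequence_space step_meas
  by (simp add: sequence_space_def product_prob_space_def product_prob_space_axioms_def
      product_sigma_finite_def prob_space_step_meas prob_space_imp_sigma_finite)

lemma walk_space_eq: "walk_space = steps.S"
  unfolding walk_space_def by simp

lemma prob_space_walk_space: "prob_space walk_space"
  unfolding walk_space_eq by (rule steps.prob_space_axioms)

lemma sets_step_meas: "sets step_meas = sets (borel \<Otimes>\<^sub>M count_space UNIV)"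
  unfolding step_meas_def exp_meas_def by (intro sets_pair_measure_cong) auto

lemma measurable_fst_step_meas:
  "f \<in> borel_measurable borel \<Longrightarrow> (\<lambda>s. f (fst s)) \<in> borel_measurable step_meas"
  by (subst measurable_cong_sets[OF sets_step_meas refl]) simp

lemma measurable_snd_step_meas: "snd \<in> step_meas \<rightarrow>\<^sub>M count_space UNIV"
  by (subst measurable_cong_sets[OF sets_step_meas refl]) simp

lemma measurable_walk_component: "(\<lambda>\<omega>. \<omega> n) \<in> walk_space \<rightarrow>\<^sub>M step_meas"
  unfolding walk_space_def by (rule measurable_component_singleton) simp

lemma nn_integral_walk_space_case_nat:
  assumes f: "f \<in> borel_measurable walk_space"
  shows "(\<integral>\<^sup>+\<omega>. f \<omega> \<partial>walk_space) = (\<integral>\<^sup>+s. \<integral>\<^sup>+\<omega>. f (case_nat s \<omega>) \<partial>walk_space \<partial>step_meas)"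
proof -
  have shift: "(\<lambda>(s, \<omega>). case_nat s \<omega>) \<in> step_meas \<Otimes>\<^sub>M steps.S \<rightarrow>\<^sub>M steps.S"
    by measurable
  have f_shift: "(\<lambda>p. f (case_prod case_nat p)) \<in> borel_measurable (step_meas \<Otimes>\<^sub>M steps.S)"
    using measurable_compose[OF shift f[unfolded walk_space_eq]] by (simp add: case_prod_beta')
  have "(\<integral>\<^sup>+\<omega>. f \<omega> \<partial>walk_space)
      = (\<integral>\<^sup>+\<omega>. f \<omega> \<partial>distr (step_meas \<Otimes>\<^sub>M steps.S) steps.S (\<lambda>(s, \<omega>). case_nat s \<omega>))"
    unfolding walk_space_eq steps.PiM_iter ..
  also have "\<dots> = (\<integral>\<^sup>+p. f (case_prod case_nat p) \<partial>(step_meas \<Otimes>\<^sub>M steps.S))"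
    using f unfolding walk_space_eq by (intro nn_integral_distr shift) (simp add: case_prod_beta')
  also have "\<dots> = (\<integral>\<^sup>+s. \<integral>\<^sup>+\<omega>. f (case_nat s \<omega>) \<partial>steps.S \<partial>step_meas)"
    using sigma_finite_measure.nn_integral_fst[OF
        prob_space_imp_sigma_finite[OF steps.prob_space_axioms] f_shift] by simp
  finally show ?thesis unfolding walk_space_eq .
qed

lemma AE_holding_times_nonneg: "AE \<omega> in walk_space. \<forall>n. 0 \<le> fst (\<omega> n)"
proof -
  interpret E: prob_space exp_meas by (rule prob_space_exp_meas)
  interpret B: prob_space "measure_pmf (bernoulli_pmf (1/2))" by (rule prob_space_measure_pmf)
  interpret P: pair_prob_space exp_meas "measure_pmf (bernoulli_pmf (1/2))" ..
  have nonneg_set: "{s \<in> space step_meas. 0 \<le> fst s} \<in> sets step_meas"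
    using measurable_fst_step_meas[of "\<lambda>x. x"] by measurable
  have "AE \<tau> in exp_meas. 0 \<le> \<tau>"
    unfolding exp_meas_def by (subst AE_density) (auto simp: exponential_density_def)
  then have "AE s in step_meas. 0 \<le> fst s"
    unfolding step_meas_def
    by (intro P.AE_pair_measure) (use nonneg_set in \<open>auto simp: step_meas_def\<close>)
  then have "AE s in distr walk_space step_meas (\<lambda>\<omega>. \<omega> n). 0 \<le> fst s" for n
    unfolding walk_space_eq by (subst steps.PiM_component) simp_all
  then have "AE \<omega> in walk_space. 0 \<le> fst (\<omega> n)" for n
    using AE_distr_iff[OF measurable_walk_component nonneg_set] by blast
  then show ?thesis by (simp add: AE_all_countable)
qed

section \<open>The jump chain and its path products\<close>

definition walk_step :: "nat \<Rightarrow> int \<Rightarrow> bool \<Rightarrow> int" where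
  "walk_step N y up =
     (if up then (if y + 1 \<le> int N then y + 1 else y)
      else (if - int N \<le> y - 1 then y - 1 else y))"

lemma jump_chain_Suc_walk_step:
  "jump_chain N x \<omega> (Suc n) = walk_step N (jump_chain N x \<omega> n) (snd (\<omega> n))"
  by (simp add: walk_step_def Let_def)

declare jump_chain.simps(2) [simp del]

lemma jump_chain_Suc_shift:
  "jump_chain N x \<omega> (Suc n) = jump_chain N (walk_step N x (snd (\<omega> 0))) (\<lambda>i. \<omega> (Suc i)) n"
  by (induction n) (simp_all add: jump_chain_Suc_walk_step)

lemma walk_step_in_range: "y \<in> {- int N..int N} \<Longrightarrow> walk_step N y up \<in> {- int N..int N}"
  by (auto simp: walk_step_def)

lemma jump_chain_in_range: "x \<in> {- int N..int N} \<Longrightarrow> jump_chain N x \<omega> n \<in> {- int N..int N}"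
  by (induction n) (auto simp: jump_chain_Suc_walk_step walk_step_def)

lemma measurable_jump_chain: "(\<lambda>\<omega>. jump_chain N x \<omega> n) \<in> walk_space \<rightarrow>\<^sub>M count_space UNIV"
proof (induction n)
  case (Suc n)
  have "(\<lambda>\<omega>. snd (\<omega> n)) \<in> walk_space \<rightarrow>\<^sub>M count_space UNIV"
    by (rule measurable_compose[OF measurable_walk_component measurable_snd_step_meas])
  then have "(\<lambda>\<omega>. walk_step N y (snd (\<omega> n))) \<in> walk_space \<rightarrow>\<^sub>M count_space UNIV" for y
    by (rule measurable_compose) simp
  then show ?case
    unfolding jump_chain_Suc_walk_step by (rule measurable_compose_countable[OF _ Suc])
qed simp

definition path_product ::
    "nat \<Rightarrow> (int \<Rightarrow> real \<times> bool \<Rightarrow> real) \<Rightarrow> (int \<Rightarrow> real) \<Rightarrow> nat \<Rightarrow> int \<Rightarrow> (nat \<Rightarrow> real \<times> bool) \<Rightarrow> real"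
  where "path_product N \<phi> H M x \<omega> = (\<Prod>n<M. \<phi> (jump_chain N x \<omega> n) (\<omega> n)) * H (jump_chain N x \<omega> M)"

lemma path_product_Suc_case_nat:
  "path_product N \<phi> H (Suc M) x (case_nat s \<omega>) = \<phi> x s * path_product N \<phi> H M (walk_step N x (snd s)) \<omega>"
proof -
  have "(\<lambda>i. case_nat s \<omega> (Suc i)) = \<omega>" by simp
  then show ?thesis
    unfolding path_product_def prod.lessThan_Suc_shift by (simp add: jump_chain_Suc_shift mult.assoc)
qed

lemma path_product_nonneg:
  "(\<And>y s. 0 \<le> \<phi> y s) \<Longrightarrow> (\<And>y. 0 \<le> H y) \<Longrightarrow> 0 \<le> path_product N \<phi> H M x \<omega>"
  unfolding path_product_def by (intro mult_nonneg_nonneg prod_nonneg) auto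

lemma measurable_path_product:
  assumes \<phi>: "\<And>y. \<phi> y \<in> borel_measurable step_meas"
  shows "path_product N \<phi> H M x \<in> borel_measurable walk_space"
proof -
  have "(\<lambda>\<omega>. \<phi> (jump_chain N x \<omega> n) (\<omega> n)) \<in> borel_measurable walk_space" for n
    by (rule measurable_compose_countable[OF _ measurable_jump_chain])
       (rule measurable_compose[OF measurable_walk_component \<phi>])
  moreover have "(\<lambda>\<omega>. H (jump_chain N x \<omega> M)) \<in> borel_measurable walk_space"
    by (rule measurable_compose_countable[OF _ measurable_jump_chain]) simp
  ultimately show ?thesis
    unfolding path_product_def[abs_def] by (intro borel_measurable_times borel_measurable_prod)
qed

lemma nn_integral_path_product_le:
  assumes \<phi>_meas: "\<And>y. \<phi> y \<in> borel_measurable step_meas"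
    and \<phi>_nonneg: "\<And>y s. 0 \<le> \<phi> y s" and H_nonneg: "\<And>y. 0 \<le> H y" and q: "0 \<le> q"
    and one_step: "\<And>y. y \<in> {- int N..int N} \<Longrightarrow>
       (\<integral>\<^sup>+s. ennreal (\<phi> y s * H (walk_step N y (snd s))) \<partial>step_meas) \<le> ennreal (q * H y)"
    and x: "x \<in> {- int N..int N}"
  shows "(\<integral>\<^sup>+\<omega>. ennreal (path_product N \<phi> H M x \<omega>) \<partial>walk_space) \<le> ennreal (q ^ M * H x)"
  using x
proof (induction M arbitrary: x)
  case 0
  interpret prob_space walk_space by (rule prob_space_walk_space)
  show ?case by (simp add: path_product_def emeasure_space_1)
next
  case (Suc M)
  note meas = measurable_path_product[OF \<phi>_meas]
  have H_next_meas: "(\<lambda>s. H (walk_step N x (snd s))) \<in> borel_measurable step_meas"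
    by (rule measurable_compose[OF measurable_snd_step_meas]) simp
  have "(\<integral>\<^sup>+\<omega>. ennreal (path_product N \<phi> H (Suc M) x \<omega>) \<partial>walk_space)
      = (\<integral>\<^sup>+s. ennreal (\<phi> x s) *
           (\<integral>\<^sup>+\<omega>. ennreal (path_product N \<phi> H M (walk_step N x (snd s)) \<omega>) \<partial>walk_space) \<partial>step_meas)"
    using meas
    by (subst nn_integral_walk_space_case_nat, measurable)
       (intro nn_integral_cong, subst nn_integral_cmult[symmetric],
        auto simp: path_product_Suc_case_nat ennreal_mult' \<phi>_nonneg)
  also have "\<dots> \<le> (\<integral>\<^sup>+s. ennreal (\<phi> x s) * ennreal (q ^ M * H (walk_step N x (snd s))) \<partial>step_meas)"
    using Suc.IH walk_step_in_range[OF Suc.prems] by (intro nn_integral_mono mult_left_mono) auto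
  also have "\<dots> = ennreal (q ^ M) * (\<integral>\<^sup>+s. ennreal (\<phi> x s * H (walk_step N x (snd s))) \<partial>step_meas)"
    using \<phi>_meas H_next_meas
    by (subst nn_integral_cmult[symmetric], measurable)
       (intro nn_integral_cong, simp add: ennreal_mult'[symmetric] \<phi>_nonneg H_nonneg q mult_ac)
  also have "\<dots> \<le> ennreal (q ^ M) * ennreal (q * H x)"
    by (intro mult_left_mono one_step Suc.prems) auto
  also have "\<dots> = ennreal (q ^ Suc M * H x)"
    by (simp add: ennreal_mult'[symmetric] q H_nonneg mult_ac)
  finally show ?case .
qed

section \<open>Discounted one-step expectations\<close>

lemma nn_integral_exp_meas_exp:
  assumes a: "-1 < a"
  shows "(\<integral>\<^sup>+\<tau>. ennreal (exp (- (\<tau> * a))) \<partial>exp_meas) = ennreal (1 / (1 + a))"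
proof -
  interpret D: prob_space "density lborel (exponential_density (1 + a))"
    using a by (intro prob_space_exponential_density) simp
  have density_total: "(\<integral>\<^sup>+\<tau>. ennreal (exponential_density (1 + a) \<tau>) \<partial>lborel) = 1"
    using D.emeasure_space_1 by (subst (asm) emeasure_density) auto
  have "ennreal (exponential_density 1 \<tau>) * ennreal (exp (- (\<tau> * a)))
      = ennreal (1 / (1 + a)) * ennreal (exponential_density (1 + a) \<tau>)" for \<tau>
  proof -
    have "exp (- \<tau>) * exp (- (\<tau> * a)) = exp (- \<tau> * (1 + a))"
      by (simp add: mult_exp_exp algebra_simps)
    also have "\<dots> = 1 / (1 + a) * ((1 + a) * exp (- \<tau> * (1 + a)))"
      using a by simp
    finally show ?thesis
      using a by (simp add: exponential_density_def ennreal_mult'[symmetric])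
  qed
  then have "(\<integral>\<^sup>+\<tau>. ennreal (exp (- (\<tau> * a))) \<partial>exp_meas)
      = (\<integral>\<^sup>+\<tau>. ennreal (1 / (1 + a)) * ennreal (exponential_density (1 + a) \<tau>) \<partial>lborel)"
    unfolding exp_meas_def by (subst nn_integral_density) auto
  also have "\<dots> = ennreal (1 / (1 + a))"
    by (subst nn_integral_cmult) (simp_all add: density_total)
  finally show ?thesis .
qed

lemma nn_integral_step_meas_product:
  assumes f: "f \<in> borel_measurable borel" and f_nonneg: "\<And>\<tau>. 0 \<le> f \<tau>" and g_nonneg: "\<And>b. 0 \<le> g b"
  shows "(\<integral>\<^sup>+s. ennreal (f (fst s) * g (snd s)) \<partial>step_meas)
     = (\<integral>\<^sup>+\<tau>. ennreal (f \<tau>) \<partial>exp_meas) * ennreal ((g True + g False) / 2)"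
proof -
  have coin: "(\<integral>\<^sup>+b. ennreal (f \<tau> * g b) \<partial>measure_pmf (bernoulli_pmf (1/2)))
      = ennreal (f \<tau>) * ennreal ((g True + g False) / 2)" for \<tau>
  proof -
    have half: "ennreal z * inverse 2 = ennreal (z / 2)" if "0 \<le> z" for z :: real
      using that by (simp add: ennreal_divide_numeral[symmetric] divide_ennreal_def)
    have "(\<integral>\<^sup>+b. ennreal (f \<tau> * g b) \<partial>measure_pmf (bernoulli_pmf (1/2)))
        = ennreal (f \<tau> * g True / 2 + f \<tau> * g False / 2)"
      using f_nonneg[of \<tau>] g_nonneg[of True] g_nonneg[of False]
      by (simp add: half ennreal_plus[symmetric] del: ennreal_plus)
    then show ?thesis
      using f_nonneg[of \<tau>] by (simp add: ennreal_mult'[symmetric] add_divide_distrib algebra_simps)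
  qed
  have sets_exp: "sets exp_meas = sets borel"
    unfolding exp_meas_def by simp
  have "(\<lambda>s. g (snd s)) \<in> borel_measurable step_meas"
    by (rule measurable_compose[OF measurable_snd_step_meas]) simp
  then have meas: "(\<lambda>s. ennreal (f (fst s) * g (snd s))) \<in> borel_measurable step_meas"
    using measurable_fst_step_meas[OF f] by measurable
  have "(\<integral>\<^sup>+s. ennreal (f (fst s) * g (snd s)) \<partial>step_meas)
      = (\<integral>\<^sup>+\<tau>. \<integral>\<^sup>+b. ennreal (f \<tau> * g b) \<partial>measure_pmf (bernoulli_pmf (1/2)) \<partial>exp_meas)"
    using sigma_finite_measure.nn_integral_fst[OF prob_space_imp_sigma_finite[OF prob_space_measure_pmf]
        meas[unfolded step_meas_def]]
    unfolding step_meas_def by simp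
  also have "\<dots> = (\<integral>\<^sup>+\<tau>. ennreal (f \<tau>) \<partial>exp_meas) * ennreal ((g True + g False) / 2)"
    unfolding coin using f by (intro nn_integral_multc) (simp add: measurable_cong_sets[OF sets_exp refl])
  finally show ?thesis .
qed

definition discount :: "(int \<Rightarrow> real) \<Rightarrow> int \<Rightarrow> real \<times> bool \<Rightarrow> real" where
  "discount a y s = exp (- (fst s * a y))"

lemma measurable_discount: "discount a y \<in> borel_measurable step_meas"
  unfolding discount_def by (rule measurable_fst_step_meas) simp

lemma nn_integral_step_meas_discount:
  assumes a: "-1 < a y" and g_nonneg: "\<And>b. 0 \<le> g b"
  shows "(\<integral>\<^sup>+s. ennreal (discount a y s * g (snd s)) \<partial>step_meas)
     = ennreal ((g True + g False) / 2 / (1 + a y))"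
proof -
  have "(\<integral>\<^sup>+s. ennreal (discount a y s * g (snd s)) \<partial>step_meas)
      = ennreal (1 / (1 + a y)) * ennreal ((g True + g False) / 2)"
    unfolding discount_def
    using nn_integral_step_meas_product[of "\<lambda>\<tau>. exp (- (\<tau> * a y))" g] g_nonneg
    by (simp add: nn_integral_exp_meas_exp[OF a])
  then show ?thesis
    using a by (simp add: ennreal_mult'[symmetric] mult.commute)
qed

lemma path_product_discount:
  "path_product N (discount a) H M x \<omega>
     = exp (- (\<Sum>n<M. fst (\<omega> n) * a (jump_chain N x \<omega> n))) * H (jump_chain N x \<omega> M)"
  unfolding path_product_def discount_def by (simp add: exp_sum[symmetric] sum_negf)

section \<open>Contraction of the Lyapunov function\<close>

definition boundary_indicator :: "nat \<Rightarrow> int \<Rightarrow> real" where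
  "boundary_indicator N y = (if y = int N \<or> y = - int N then 1 else 0)"

definition lyapunov :: "nat \<Rightarrow> int \<Rightarrow> real" where
  "lyapunov N y = max (3 * real N ^ 2 - real_of_int y ^ 2) 0"

lemma lyapunov_nonneg: "0 \<le> lyapunov N y"
  unfolding lyapunov_def by simp

lemma square_le_if_in_range: "y \<in> {- int N..int N} \<Longrightarrow> real_of_int y ^ 2 \<le> real N ^ 2"
  by (simp add: abs_le_square_iff[symmetric] abs_le_iff)

lemma lyapunov_eq:
  assumes "y \<in> {- int N..int N}"
  shows "lyapunov N y = 3 * real N ^ 2 - real_of_int y ^ 2"
  using square_le_if_in_range[OF assms] zero_le_power2[of "real N"]
  unfolding lyapunov_def by (intro max_absorb1) linarith

lemma lyapunov_bounds:
  "y \<in> {- int N..int N} \<Longrightarrow> 2 * real N ^ 2 \<le> lyapunov N y \<and> lyapunov N y \<le> 3 * real N ^ 2"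
  using square_le_if_in_range[of y N] by (simp add: lyapunov_eq)

lemma contraction_factor_nonneg:
  assumes "0 < N"
  shows "0 \<le> 1 - 1 / (3 * real N ^ 2)"
proof -
  have "1 \<le> real N" using assms by simp
  then have "1 \<le> 3 * real N ^ 2" using one_le_power[of "real N" 2] by linarith
  then show ?thesis using assms by (simp add: divide_le_eq_1)
qed

lemma lyapunov_neighbours_interior:
  assumes "\<bar>y\<bar> < int N"
  shows "lyapunov N (walk_step N y True) + lyapunov N (walk_step N y False) = 2 * lyapunov N y - 2"
proof -
  have steps: "walk_step N y True = y + 1" "walk_step N y False = y - 1"
    using assms by (auto simp: walk_step_def)
  have "y \<in> {- int N..int N}" "y + 1 \<in> {- int N..int N}" "y - 1 \<in> {- int N..int N}"
    using assms by auto
  then show ?thesis by (simp add: steps lyapunov_eq power2_eq_square field_simps)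
qed

lemma lyapunov_neighbours_boundary:
  assumes N: "0 < N" and y: "\<bar>y\<bar> = int N"
  shows "lyapunov N (walk_step N y True) + lyapunov N (walk_step N y False)
    = 4 * real N ^ 2 + 2 * real N - 1"
proof -
  consider (top) "y = int N" | (bottom) "y = - int N" using y by linarith
  then show ?thesis
  proof cases
    case top
    then have steps: "walk_step N y True = int N" "walk_step N y False = int N - 1"
      using N by (auto simp: walk_step_def)
    have "int N - 1 \<in> {- int N..int N}" using N by auto
    then show ?thesis by (simp add: steps lyapunov_eq power2_eq_square field_simps)
  next
    case bottom
    then have steps: "walk_step N y True = - int N + 1" "walk_step N y False = - int N"
      using N by (auto simp: walk_step_def)
    have "- int N + 1 \<in> {- int N..int N}" using N by auto
    then show ?thesis by (simp add: steps lyapunov_eq power2_eq_square field_simps)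
  qed
qed

lemma lyapunov_step_mean_le:
  assumes N: "0 < N" and y: "y \<in> {- int N..int N}"
  shows "(lyapunov N (walk_step N y True) + lyapunov N (walk_step N y False)) / 2
      / (1 + boundary_indicator N y) \<le> (1 - 1 / (3 * real N ^ 2)) * lyapunov N y"
proof (cases "\<bar>y\<bar> = int N")
  case True
  define n where "n = real N"
  have n: "1 \<le> n" using N unfolding n_def by simp
  then have "n \<le> n ^ 2" by (simp add: power2_eq_square)
  then have "(4 * n ^ 2 + 2 * n - 1) / 4 \<le> 2 * n ^ 2 - 2 / 3"
    using n by (simp add: field_simps)
  also have "\<dots> = (1 - 1 / (3 * n ^ 2)) * (2 * n ^ 2)"
    using n by (simp add: field_simps)
  finally have "(4 * n ^ 2 + 2 * n - 1) / 4 \<le> (1 - 1 / (3 * n ^ 2)) * (2 * n ^ 2)" .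
  moreover have "y = int N \<or> y = - int N" using True by linarith
  then have "boundary_indicator N y = 1" "lyapunov N y = 2 * n ^ 2"
    using y unfolding n_def by (auto simp: boundary_indicator_def lyapunov_eq)
  ultimately show ?thesis
    unfolding lyapunov_neighbours_boundary[OF N True] n_def by simp
next
  case False
  then have interior: "\<bar>y\<bar> < int N" using y by auto
  then have "boundary_indicator N y = 0" by (auto simp: boundary_indicator_def)
  moreover have "lyapunov N y / (3 * real N ^ 2) \<le> 1"
    using lyapunov_bounds[OF y] N by (simp add: divide_le_eq_1)
  ultimately show ?thesis
    unfolding lyapunov_neighbours_interior[OF interior] by (simp add: diff_divide_distrib algebra_simps)
qed

lemma nn_integral_lyapunov_path_product_le:
  assumes N: "0 < N" and x: "x \<in> {- int N..int N}"
  shows "(\<integral>\<^sup>+\<omega>. ennreal (path_product N (discount (boundary_indicator N)) (lyapunov N) M x \<omega>) \<partial>walk_space)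
    \<le> ennreal ((1 - 1 / (3 * real N ^ 2)) ^ M * lyapunov N x)"
proof (rule nn_integral_path_product_le[OF measurable_discount _ _ _ _ x])
  show "0 \<le> 1 - 1 / (3 * real N ^ 2)"
    using N by (rule contraction_factor_nonneg)
  fix y assume y: "y \<in> {- int N..int N}"
  have "-1 < boundary_indicator N y" by (simp add: boundary_indicator_def)
  then show "(\<integral>\<^sup>+s. ennreal (discount (boundary_indicator N) y s * lyapunov N (walk_step N y (snd s))) \<partial>step_meas)
      \<le> ennreal ((1 - 1 / (3 * real N ^ 2)) * lyapunov N y)"
    using lyapunov_step_mean_le[OF N y]
    by (subst nn_integral_step_meas_discount) (auto simp: lyapunov_nonneg intro: ennreal_leI)
qed (auto simp: discount_def lyapunov_nonneg)

lemma nn_integral_growth_path_product_le: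
  assumes x: "x \<in> {- int N..int N}"
  shows "(\<integral>\<^sup>+\<omega>. ennreal (path_product N (discount (\<lambda>_. - 1 / 2)) (\<lambda>_. 1) M x \<omega>) \<partial>walk_space)
    \<le> ennreal (2 ^ M)"
proof -
  have "(\<integral>\<^sup>+\<omega>. ennreal (path_product N (discount (\<lambda>_. - 1 / 2)) (\<lambda>_. 1) M x \<omega>) \<partial>walk_space)
      \<le> ennreal (2 ^ M * 1)"
  proof (rule nn_integral_path_product_le[OF measurable_discount _ _ _ _ x])
    fix y
    show "(\<integral>\<^sup>+s. ennreal (discount (\<lambda>_. - 1 / 2) y s * 1) \<partial>step_meas) \<le> ennreal (2 * 1)"
      using nn_integral_step_meas_discount[of "\<lambda>_. - 1 / 2" y "\<lambda>_. 1"] by simp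
  qed (simp_all add: discount_def)
  then show ?thesis by simp
qed

section \<open>Occupation time of the boundary\<close>

text \<open>Jump attempt number k, counted from 0 as in njumps, happens at time jump_time \<omega> (Suc k).\<close>

definition jump_time :: "(nat \<Rightarrow> real \<times> bool) \<Rightarrow> nat \<Rightarrow> real" where
  "jump_time \<omega> k = (\<Sum>i<k. fst (\<omega> i))"

lemma sum_atMost_eq_jump_time: "(\<Sum>i\<le>k. fst (\<omega> i)) = jump_time \<omega> (Suc k)"
  unfolding jump_time_def lessThan_Suc_atMost ..

lemma jump_time_mono: "(\<And>i. 0 \<le> fst (\<omega> i)) \<Longrightarrow> m \<le> n \<Longrightarrow> jump_time \<omega> m \<le> jump_time \<omega> n"
  unfolding jump_time_def by (rule sum_mono2) auto

lemma jump_time_nonneg: "(\<And>i. 0 \<le> fst (\<omega> i)) \<Longrightarrow> 0 \<le> jump_time \<omega> m"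
  unfolding jump_time_def by (rule sum_nonneg) auto

lemma njumps_eq:
  assumes pos: "\<And>n. 0 \<le> fst (\<omega> n)"
    and before: "\<forall>k<m. jump_time \<omega> (Suc k) \<le> s" and after: "s < jump_time \<omega> (Suc m)"
  shows "njumps \<omega> s = m"
proof -
  have "k < m" if "jump_time \<omega> (Suc k) \<le> s" for k
  proof (rule ccontr)
    assume "\<not> k < m"
    then have "jump_time \<omega> (Suc m) \<le> jump_time \<omega> (Suc k)"
      by (intro jump_time_mono[of \<omega>, OF pos]) simp
    with that after show False by simp
  qed
  then have "{k. (\<Sum>i\<le>k. fst (\<omega> i)) \<le> s} = {..<m}"
    using before by (auto simp: sum_atMost_eq_jump_time)
  then show ?thesis unfolding njumps_def by simp
qed

lemma njumps_eq_Least: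
  assumes pos: "\<And>n. 0 \<le> fst (\<omega> n)"
  shows "njumps \<omega> s =
    (if \<forall>k. jump_time \<omega> (Suc k) \<le> s then 0 else LEAST k. s < jump_time \<omega> (Suc k))"
proof (cases "\<forall>k. jump_time \<omega> (Suc k) \<le> s")
  case True
  then have "{k. (\<Sum>i\<le>k. fst (\<omega> i)) \<le> s} = UNIV" by (simp add: sum_atMost_eq_jump_time)
  then have "njumps \<omega> s = 0" unfolding njumps_def by simp
  with True show ?thesis by simp
next
  case False
  then obtain j where "s < jump_time \<omega> (Suc j)" by (auto simp: not_le)
  then have "s < jump_time \<omega> (Suc (LEAST k. s < jump_time \<omega> (Suc k)))"
    by (rule LeastI)
  moreover have "\<forall>k<(LEAST k. s < jump_time \<omega> (Suc k)). jump_time \<omega> (Suc k) \<le> s"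
    using not_less_Least by force
  ultimately have "njumps \<omega> s = (LEAST k. s < jump_time \<omega> (Suc k))"
    by (intro njumps_eq[of \<omega>, OF pos])
  then show ?thesis using False by (simp only: if_not_P if_False)
qed

lemma measurable_njumps:
  assumes "\<And>n. 0 \<le> fst (\<omega> n)"
  shows "njumps \<omega> \<in> borel \<rightarrow>\<^sub>M count_space UNIV"
proof -
  have "njumps \<omega> =
      (\<lambda>s. if \<forall>k. jump_time \<omega> (Suc k) \<le> s then 0 else LEAST k. s < jump_time \<omega> (Suc k))"
    by (rule ext) (rule njumps_eq_Least[of \<omega>, OF assms])
  then show ?thesis by (simp only:) measurable
qed

lemma Tstar_nonneg: "0 \<le> Tstar N x t \<omega>"
  unfolding Tstar_def set_lebesgue_integral_def
  by (rule integral_nonneg_AE) (auto simp: indicator_def)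

lemma boundary_holding_le_occupation:
  assumes pos: "\<And>n. 0 \<le> fst (\<omega> n)" and M: "jump_time \<omega> M \<le> t"
  shows "(\<Sum>n<M. boundary_indicator N (jump_chain N x \<omega> n) * indicator {jump_time \<omega> n..<jump_time \<omega> (Suc n)} s)
     \<le> indicator {0..t} s * boundary_indicator N (walk_pos N x \<omega> s)"
proof (cases "\<exists>n<M. s \<in> {jump_time \<omega> n..<jump_time \<omega> (Suc n)}")
  case True
  then obtain n0 where n0: "n0 < M" "s \<in> {jump_time \<omega> n0..<jump_time \<omega> (Suc n0)}" by blast
  have jumps: "njumps \<omega> s = n" if s: "s \<in> {jump_time \<omega> n..<jump_time \<omega> (Suc n)}" for n
  proof (rule njumps_eq[of \<omega>, OF pos])
    show "\<forall>k<n. jump_time \<omega> (Suc k) \<le> s"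
    proof (intro allI impI)
      fix k assume "k < n"
      then have "jump_time \<omega> (Suc k) \<le> jump_time \<omega> n"
        by (intro jump_time_mono[of \<omega>, OF pos]) simp
      then show "jump_time \<omega> (Suc k) \<le> s" using s by simp
    qed
  qed (use s in simp)
  have "(\<Sum>n<M. boundary_indicator N (jump_chain N x \<omega> n) * indicator {jump_time \<omega> n..<jump_time \<omega> (Suc n)} s)
      = (\<Sum>n<M. if n = n0 then boundary_indicator N (jump_chain N x \<omega> n) else 0)"
    using jumps n0(2) by (intro sum.cong) (auto simp: indicator_def)
  also have "\<dots> = boundary_indicator N (walk_pos N x \<omega> s)"
    using n0 jumps[OF n0(2)] by (simp add: walk_pos_def)
  finally show ?thesis
    using n0 jump_time_nonneg[of \<omega>, OF pos, of n0] jump_time_mono[of \<omega>, OF pos, of "Suc n0" M] M by simp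
next
  case False
  then have "(\<Sum>n<M. boundary_indicator N (jump_chain N x \<omega> n)
      * indicator {jump_time \<omega> n..<jump_time \<omega> (Suc n)} s) = 0"
    by (intro sum.neutral ballI) (auto simp: indicator_def)
  then show ?thesis by (simp add: boundary_indicator_def)
qed

lemma Tstar_ge_boundary_holding:
  assumes pos: "\<And>n. 0 \<le> fst (\<omega> n)" and M: "jump_time \<omega> M \<le> t"
  shows "(\<Sum>n<M. fst (\<omega> n) * boundary_indicator N (jump_chain N x \<omega> n)) \<le> Tstar N x t \<omega>"
proof -
  define step where "step s = (\<Sum>n<M. boundary_indicator N (jump_chain N x \<omega> n)
      * indicator {jump_time \<omega> n..<jump_time \<omega> (Suc n)} s)" for s :: real
  define occ where "occ s = indicator {0..t} s * boundary_indicator N (walk_pos N x \<omega> s)" for s :: real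
  have interval: "integrable lborel (indicator {a..<b} :: real \<Rightarrow> real)" for a b :: real
    by (cases "a \<le> b") (simp_all add: integrable_indicator_iff)
  have occ_meas: "occ \<in> borel_measurable lborel"
    unfolding occ_def walk_pos_def
    using measurable_compose[OF measurable_njumps[of \<omega>, OF pos],
        of "\<lambda>m. boundary_indicator N (jump_chain N x \<omega> m)" borel]
    by simp
  have "integrable lborel (indicator {0..t} :: real \<Rightarrow> real)"
    by (cases "0 \<le> t") (simp_all add: integrable_indicator_iff)
  then have occ_int: "integrable lborel occ"
    by (rule Bochner_Integration.integrable_bound[OF _ occ_meas])
       (auto simp: occ_def boundary_indicator_def indicator_def)
  have step_int: "integrable lborel step"
    unfolding step_def by (intro Bochner_Integration.integrable_sum integrable_mult_right interval)
  have "measure lborel {jump_time \<omega> n..<jump_time \<omega> (Suc n)} = fst (\<omega> n)" for n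
    using pos[of n] by (simp add: jump_time_def)
  then have "(\<Sum>n<M. fst (\<omega> n) * boundary_indicator N (jump_chain N x \<omega> n)) = integral\<^sup>L lborel step"
    unfolding step_def by (subst Bochner_Integration.integral_sum) (auto simp: interval mult.commute)
  also have "\<dots> \<le> integral\<^sup>L lborel occ"
    using boundary_holding_le_occupation[OF pos M] step_int occ_int
    by (intro integral_mono) (auto simp: step_def occ_def)
  also have "\<dots> = Tstar N x t \<omega>"
    unfolding occ_def Tstar_def set_lebesgue_integral_def boundary_indicator_def by simp
  finally show ?thesis .
qed

lemma exp_neg_Tstar_le_path_products:
  assumes pos: "\<And>n. 0 \<le> fst (\<omega> n)" and N: "0 < N" and x: "x \<in> {- int N..int N}"
  shows "exp (- Tstar N x t \<omega>)
    \<le> path_product N (discount (boundary_indicator N)) (lyapunov N) M x \<omega> / (2 * real N ^ 2)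
      + exp (- t / 2) * path_product N (discount (\<lambda>_. - 1 / 2)) (\<lambda>_. 1) M x \<omega>"
    (is "_ \<le> ?P / _ + _ * ?Q")
proof -
  have N2: "0 < 2 * real N ^ 2" using N by simp
  have P_nonneg: "0 \<le> ?P"
    by (rule path_product_nonneg) (simp_all add: discount_def lyapunov_def)
  have Q_eq: "?Q = exp (jump_time \<omega> M / 2)"
    by (simp add: path_product_discount jump_time_def sum_divide_distrib sum_negf)
  show ?thesis
  proof (cases "jump_time \<omega> M \<le> t")
    case True
    let ?A = "\<Sum>n<M. fst (\<omega> n) * boundary_indicator N (jump_chain N x \<omega> n)"
    have "exp (- Tstar N x t \<omega>) \<le> exp (- ?A)"
      using Tstar_ge_boundary_holding[OF pos True] by simp
    also have "\<dots> \<le> exp (- ?A) * lyapunov N (jump_chain N x \<omega> M) / (2 * real N ^ 2)"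
      using lyapunov_bounds[OF jump_chain_in_range[OF x]] N2 by (simp add: le_divide_eq)
    also have "\<dots> = ?P / (2 * real N ^ 2)"
      by (simp add: path_product_discount)
    finally show ?thesis using Q_eq by (simp add: add_increasing2)
  next
    case False
    have "exp (- Tstar N x t \<omega>) \<le> 1" using Tstar_nonneg by simp
    also have "\<dots> \<le> exp (- t / 2) * ?Q"
      using False unfolding Q_eq by (simp add: mult_exp_exp)
    finally show ?thesis using P_nonneg N2 by (simp add: add_increasing)
  qed
qed

lemma nn_integral_exp_neg_Tstar_le:
  assumes N: "0 < N" and x: "x \<in> {- int N..int N}"
  shows "(\<integral>\<^sup>+\<omega>. ennreal (exp (- Tstar N x t \<omega>)) \<partial>walk_space)
    \<le> ennreal (3 / 2 * (1 - 1 / (3 * real N ^ 2)) ^ M + exp (- t / 2) * 2 ^ M)"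
proof -
  let ?q = "1 - 1 / (3 * real N ^ 2)"
  let ?P = "path_product N (discount (boundary_indicator N)) (lyapunov N) M x"
  let ?Q = "path_product N (discount (\<lambda>_. - 1 / 2)) (\<lambda>_. 1) M x"
  have N2: "0 < 2 * real N ^ 2" using N by simp
  have q: "0 \<le> ?q" using N by (rule contraction_factor_nonneg)
  have nonneg: "0 \<le> ?P \<omega>" "0 \<le> ?Q \<omega>" for \<omega>
    by (rule path_product_nonneg; simp add: discount_def lyapunov_def)+
  have "(\<integral>\<^sup>+\<omega>. ennreal (exp (- Tstar N x t \<omega>)) \<partial>walk_space)
      \<le> (\<integral>\<^sup>+\<omega>. ennreal (1 / (2 * real N ^ 2)) * ennreal (?P \<omega>)
          + ennreal (exp (- t / 2)) * ennreal (?Q \<omega>) \<partial>walk_space)"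
    using AE_holding_times_nonneg
  proof (intro nn_integral_mono_AE, eventually_elim)
    case (elim \<omega>)
    then show ?case
      using exp_neg_Tstar_le_path_products[OF _ N x, of \<omega> t M] nonneg[of \<omega>] N2
      by (simp add: ennreal_mult'[symmetric] ennreal_plus[symmetric] del: ennreal_plus)
  qed
  also have "\<dots> = ennreal (1 / (2 * real N ^ 2)) * (\<integral>\<^sup>+\<omega>. ennreal (?P \<omega>) \<partial>walk_space)
      + ennreal (exp (- t / 2)) * (\<integral>\<^sup>+\<omega>. ennreal (?Q \<omega>) \<partial>walk_space)"
    using measurable_path_product[OF measurable_discount]
    by (simp add: nn_integral_add nn_integral_cmult)
  also have "\<dots> \<le> ennreal (1 / (2 * real N ^ 2)) * ennreal (?q ^ M * lyapunov N x)
      + ennreal (exp (- t / 2)) * ennreal (2 ^ M)"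
    by (intro add_mono mult_left_mono nn_integral_lyapunov_path_product_le[OF N x]
        nn_integral_growth_path_product_le[OF x]) auto
  also have "\<dots> \<le> ennreal (3 / 2 * ?q ^ M + exp (- t / 2) * 2 ^ M)"
  proof -
    have "?q ^ M * lyapunov N x / (2 * real N ^ 2) \<le> ?q ^ M * (3 * real N ^ 2) / (2 * real N ^ 2)"
      using lyapunov_bounds[OF x] q N2 by (intro divide_right_mono mult_left_mono) auto
    then show ?thesis
      using q N2 lyapunov_bounds[OF x]
      by (simp add: ennreal_mult'[symmetric] ennreal_plus[symmetric] del: ennreal_plus)
  qed
  finally show ?thesis .
qed

lemma contraction_and_tail_le:
  fixes n t :: real
  assumes n: "1 \<le> n" and t: "0 \<le> t"
  shows "3 / 2 * (1 - 1 / (3 * n ^ 2)) ^ nat \<lfloor>t / 4\<rfloor> + exp (- t / 2) * 2 ^ nat \<lfloor>t / 4\<rfloor>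
    \<le> 6 * exp (- (1 / 12) * t / n ^ 2)"
proof -
  define M where "M = nat \<lfloor>t / 4\<rfloor>"
  define a where "a = 1 / (3 * n ^ 2)"
  define E where "E = exp (- (1 / 12) * t / n ^ 2)"
  have n2: "1 \<le> n ^ 2" using n by (simp add: one_le_power)
  have a: "0 < a" "a \<le> 1" using n2 unfolding a_def by (auto simp: divide_le_eq_1)
  have M: "t / 4 - 1 \<le> real M" "real M \<le> t / 4"
    using t unfolding M_def by linarith+
  have "(1 - a) ^ M \<le> exp (- a) ^ M"
    using a exp_ge_add_one_self[of "- a"] by (intro power_mono) auto
  also have "\<dots> \<le> exp (- a * (t / 4 - 1))"
    using M a by (simp add: exp_of_nat_mult[symmetric] mult.commute)
  also have "\<dots> = exp a * E"
    unfolding a_def E_def exp_add[symmetric]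
    by (rule arg_cong[where f = exp]) (use n in \<open>simp add: field_simps\<close>)
  also have "\<dots> \<le> 3 * E"
  proof -
    have "exp a \<le> 3" using exp_mono[OF a(2)] exp_le by linarith
    then show ?thesis unfolding E_def by (intro mult_right_mono) auto
  qed
  finally have contraction: "(1 - a) ^ M \<le> 3 * E" .
  have "exp (- t / 2) * 2 ^ M \<le> exp (- t / 2) * exp (real M)"
    using power_mono[OF exp_ge_add_one_self[of 1], of M]
    by (simp add: exp_of_nat_mult[symmetric])
  also have "\<dots> \<le> exp (- t / 4)"
    using M by (simp add: mult_exp_exp)
  also have "\<dots> \<le> E"
  proof -
    have "t / (12 * n ^ 2) \<le> t / 4" using t n2 by (intro divide_left_mono) auto
    then show ?thesis unfolding E_def by simp
  qed
  finally have tail: "exp (- t / 2) * 2 ^ M \<le> E" .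
  have "0 \<le> E" unfolding E_def by simp
  then show ?thesis
    using contraction tail unfolding M_def a_def E_def by linarith
qed

theorem mainTheorem3:
  shows "\<exists>c b :: real. b > 0 \<and>
    (\<forall>N::nat. N > 0 \<longrightarrow> (\<forall>x::int. - int N \<le> x \<and> x \<le> int N \<longrightarrow>
      (\<forall>t::real. t \<ge> 0 \<longrightarrow>
        (\<integral>\<omega>. exp (- Tstar N x t \<omega>) \<partial>walk_space) \<le> c * exp (- b * t / (real N)^2))))"
proof -
  have "(\<integral>\<omega>. exp (- Tstar N x t \<omega>) \<partial>walk_space) \<le> 6 * exp (- (1 / 12) * t / real N ^ 2)"
    if N: "0 < N" and x: "x \<in> {- int N..int N}" and t: "0 \<le> t" for N x t
  proof -
    let ?M = "nat \<lfloor>t / 4\<rfloor>"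
    have "(\<integral>\<omega>. exp (- Tstar N x t \<omega>) \<partial>walk_space)
        \<le> 3 / 2 * (1 - 1 / (3 * real N ^ 2)) ^ ?M + exp (- t / 2) * 2 ^ ?M"
      using nn_integral_exp_neg_Tstar_le[OF N x, of t ?M] contraction_factor_nonneg[OF N]
      by (intro integral_real_bounded) simp_all
    also have "\<dots> \<le> 6 * exp (- (1 / 12) * t / real N ^ 2)"
      using N t by (intro contraction_and_tail_le) simp_all
    finally show ?thesis .
  qed
  then show ?thesis
    by (intro exI[of _ 6] exI[of _ "1 / 12"]) simp
qed

end
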